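(* Let $X$ be a nondegenerate random variable with CDF $F$ such that $\mathbb{E}(\min\{X,X'\})$ and $\mathbb{E}(\max\{X,X'\})$ are finite, where $X'$ is an independent copy of $X$. Let $T$ be an absolutely continuous random variable with CDF $F_T$ and the same support as $X$, and let $q_1(u)=q_2(u)=u$, $0\le u\le1$. Then $$\hat G_X(\mathbf q,F_T)=\frac12\,\mathbb{E}\left[F_T(\max\{X,X'\})-F_T(\min\{X,X'\})\right].$$
   Context: The weighted $\mathbf q$-distorted Gini function of $X$ (CDF $F$, survival $\overline F=1-F$), for distortion functions $q_1,q_2$ (increasing maps $[0,1]\to[0,1]$ fixing $0$ and $1$), is $\hat G_X(\mathbf q,F_T)=\int_\Delta q_1(F(x))\,q_2(\overline F(x))\,dF_T(x)$, where $\Delta$ is the non-empty intersection of the supports of $X$ and $T$. *)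

theory Defs
  imports "HOL-Probability.Probability"
begin

definition msupport :: "real measure \<Rightarrow> real set" where
  "msupport M = {x. \<forall>e>0. 0 < measure M (ball x e)}"

definition qgini :: "(real \<Rightarrow> real) \<Rightarrow> (real \<Rightarrow> real) \<Rightarrow> real measure \<Rightarrow> real measure \<Rightarrow> real" where
  "qgini q1 q2 MX MT =
     (LINT x : (msupport MX \<inter> msupport MT) | MT. q1 (cdf MX x) * q2 (1 - cdf MX x))"

end

theory Submission
  imports Defs
begin

text \<open>Since \<open>T\<close> has no atoms, \<open>F\<^sub>T(max X X') - F\<^sub>T(min X X')\<close> is the \<open>T\<close>-mass of
  \<open>[min X X', max X X')\<close>. Integrating over \<open>(X, X')\<close> and exchanging the integrals (Fubini)
  turns the right-hand side into \<open>\<integral> P(min X X' \<le> t < max X X') dF\<^sub>T(t)\<close>, and by independence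
  \<open>P(min X X' \<le> t < max X X') = 2 F(t) (1 - F(t))\<close>. With \<open>q\<^sub>1 = q\<^sub>2 = id\<close> this is twice the
  integrand of the Gini function, and restricting the integral to the common support is harmless
  because \<open>T\<close> is concentrated on its support.\<close>

lemma not_in_msupportE:
  assumes "x \<notin> msupport M"
  obtains e where "e > 0" "measure M (ball x e) = 0"
proof -
  obtain e where "e > 0" and "\<not> 0 < measure M (ball x e)"
    using assms by (auto simp: msupport_def)
  moreover have "0 \<le> measure M (ball x e)"
    by (rule measure_nonneg)
  ultimately show thesis
    using that by simp
qed

lemma AE_in_msupport:
  assumes "finite_measure M" "sets M = sets borel"
  shows "AE x in M. x \<in> msupport M"
proof -
  interpret finite_measure M by fact
  \<comment> \<open>The complement of the support is covered by countably many null intervals with rational endpoints.\<close>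
  define I where "I = {(a::rat, b::rat). measure M {real_of_rat a<..<real_of_rat b} = 0}"
  define N where "N = (\<Union>(a, b)\<in>I. {real_of_rat a<..<real_of_rat b})"
  have "N \<in> null_sets M"
    unfolding N_def
  proof (rule null_sets_UN')
    fix i assume "i \<in> I"
    then show "(case i of (a, b) \<Rightarrow> {real_of_rat a<..<real_of_rat b}) \<in> null_sets M"
      using assms(2) by (cases i) (auto simp: I_def emeasure_eq_measure)
  qed auto
  moreover have "x \<in> N" if "x \<notin> msupport M" for x
  proof -
    obtain e where "e > 0" and e0: "measure M (ball x e) = 0"
      using \<open>x \<notin> msupport M\<close> by (rule not_in_msupportE)
    obtain a b where a: "a \<in> \<rat>" "x - e < a" "a < x" and b: "b \<in> \<rat>" "x < b" "b < x + e"
      using Rats_dense_in_real[of "x - e" x] Rats_dense_in_real[of x "x + e"] \<open>e > 0\<close> by auto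
    obtain a' b' where ab': "a = real_of_rat a'" "b = real_of_rat b'"
      using a(1) b(1) Rats_cases by metis
    have "{a<..<b} \<subseteq> ball x e"
      using a b by (auto simp: ball_def dist_real_def)
    then have "measure M {a<..<b} \<le> measure M (ball x e)"
      using assms(2) by (intro finite_measure_mono) auto
    then have "measure M {a<..<b} = 0"
      using e0 measure_nonneg[of M "{a<..<b}"] by linarith
    then have "(a', b') \<in> I"
      using ab' by (simp add: I_def)
    then show "x \<in> N"
      unfolding N_def using a b ab' by force
  qed
  ultimately show ?thesis
    by (intro AE_I'[of N]) auto
qed

lemma closed_msupport:
  assumes "finite_measure M" "sets M = sets borel"
  shows "closed (msupport M)"
  unfolding closed_def open_contains_ball
proof safe
  interpret finite_measure M by fact
  fix x assume "x \<notin> msupport M"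
  then obtain e where "e > 0" and e0: "measure M (ball x e) = 0"
    by (rule not_in_msupportE)
  have "y \<notin> msupport M" if "y \<in> ball x (e/2)" for y
  proof -
    have "ball y (e/2) \<subseteq> ball x e"
      using that by (auto simp: ball_def dist_real_def abs_if split: if_splits)
    then have "measure M (ball y (e/2)) \<le> measure M (ball x e)"
      using assms(2) by (intro finite_measure_mono) auto
    then have "\<not> 0 < measure M (ball y (e/2))"
      using e0 by linarith
    then show ?thesis
      using \<open>e > 0\<close> unfolding msupport_def by (auto intro!: exI[of _ "e/2"])
  qed
  then show "\<exists>d>0. ball x d \<subseteq> - msupport M"
    using \<open>e > 0\<close> by (intro exI[of _ "e/2"]) auto
qed

lemma measure_pair_measure_Times:
  assumes "sigma_finite_measure N" "A \<in> sets M" "B \<in> sets N"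
  shows "measure (M \<Otimes>\<^sub>M N) (A \<times> B) = measure M A * measure N B"
  using assms by (simp add: measure_def sigma_finite_measure.emeasure_pair_measure_Times enn2real_mult)

lemma absolutely_continuous_lborel_measure_singleton:
  assumes "absolutely_continuous lborel M"
  shows "measure M {x} = 0"
proof -
  have "{x} \<in> null_sets lborel"
    by (intro countable_imp_null_set_lborel) simp
  then show ?thesis
    using assms by (auto simp: absolutely_continuous_def measure_def null_setsD1)
qed

lemma (in finite_borel_measure) measure_atLeastLessThan_eq_cdf_diff:
  assumes "\<And>x. measure M {x} = 0" "a \<le> b"
  shows "measure M {a..<b} = cdf M b - cdf M a"
proof -
  have "measure M {..b} = measure M (({..<a} \<union> {a..<b}) \<union> {b})"
    using assms(2) by (intro arg_cong[where f="measure M"]) auto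
  also have "\<dots> = measure M ({..<a} \<union> {a..<b}) + measure M {b}"
    using assms(2) by (intro finite_measure_Union) (auto simp: M_is_borel)
  also have "measure M ({..<a} \<union> {a..<b}) = measure M {..<a} + measure M {a..<b}"
    by (rule finite_measure_Union) (auto simp: M_is_borel)
  finally have "measure M {..b} = measure M {..<a} + measure M {a..<b} + measure M {b}" .
  moreover have "measure M {..a} = measure M ({..<a} \<union> {a})"
    by (intro arg_cong[where f="measure M"]) auto
  moreover have "measure M ({..<a} \<union> {a}) = measure M {..<a} + measure M {a}"
    by (rule finite_measure_Union) (auto simp: M_is_borel)
  ultimately show ?thesis
    using assms(1) by (simp add: cdf_def)
qed

lemma measure_pair_min_le_less_max:
  assumes "real_distribution M"
  shows "measure (M \<Otimes>\<^sub>M M) {(x, x'). min x x' \<le> t \<and> t < max x x'} = 2 * (cdf M t * (1 - cdf M t))"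
proof -
  interpret M: real_distribution M by fact
  interpret MM: pair_prob_space M M ..
  have "measure (M \<Otimes>\<^sub>M M) {(x, x'). min x x' \<le> t \<and> t < max x x'}
      = measure (M \<Otimes>\<^sub>M M) ({..t} \<times> {t<..} \<union> {t<..} \<times> {..t})"
    by (intro arg_cong[where f="measure (M \<Otimes>\<^sub>M M)"]) (auto simp: min_def max_def)
  also have "\<dots> = measure (M \<Otimes>\<^sub>M M) ({..t} \<times> {t<..}) + measure (M \<Otimes>\<^sub>M M) ({t<..} \<times> {..t})"
    by (rule MM.finite_measure_Union) auto
  also have "\<dots> = 2 * (measure M {..t} * measure M {t<..})"
    by (simp add: measure_pair_measure_Times M.sigma_finite_measure_axioms)
  also have "measure M {t<..} = 1 - cdf M t"
    using M.prob_compl[of "{..t}"] by (simp add: cdf_def Compl_eq_Diff_UNIV[symmetric] Compl_atMost)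
  finally show ?thesis
    by (simp add: cdf_def)
qed

lemma integral_cdf_max_minus_cdf_min:
  assumes M: "real_distribution M" and "real_distribution N" and N_no_atoms: "\<And>t. measure N {t} = 0"
  shows "(\<integral>(x, x'). cdf N (max x x') - cdf N (min x x') \<partial>(M \<Otimes>\<^sub>M M))
    = 2 * (\<integral>t. cdf M t * (1 - cdf M t) \<partial>N)"
proof -
  interpret M: real_distribution M by fact
  interpret N: real_distribution N by fact
  interpret MM: pair_prob_space M M ..
  interpret MMN: pair_prob_space "M \<Otimes>\<^sub>M M" N ..
  define S :: "((real \<times> real) \<times> real) set" where "S = {((x, x'), t). min x x' \<le> t \<and> t < max x x'}"
  define g :: "real \<times> real \<Rightarrow> real \<Rightarrow> real" where "g p t = indicator S (p, t)" for p t
  have "{z \<in> space ((borel \<Otimes>\<^sub>M borel) \<Otimes>\<^sub>M borel).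
      min (fst (fst z)) (snd (fst z)) \<le> snd z \<and> snd z < max (fst (fst z)) (snd (fst z))}
      \<in> sets ((borel \<Otimes>\<^sub>M borel) \<Otimes>\<^sub>M (borel :: real measure))"
    by measurable
  moreover have "sets ((M \<Otimes>\<^sub>M M) \<Otimes>\<^sub>M N) = sets ((borel \<Otimes>\<^sub>M borel) \<Otimes>\<^sub>M borel)"
    by (intro sets_pair_measure_cong) auto
  ultimately have "S \<in> sets ((M \<Otimes>\<^sub>M M) \<Otimes>\<^sub>M N)"
    by (simp add: S_def space_pair_measure split_beta')
  then have "integrable ((M \<Otimes>\<^sub>M M) \<Otimes>\<^sub>M N) (case_prod g)"
    unfolding g_def case_prod_eta by (simp add: MMN.emeasure_eq_measure)
  then have "(\<integral>p. (\<integral>t. g p t \<partial>N) \<partial>(M \<Otimes>\<^sub>M M)) = (\<integral>t. (\<integral>p. g p t \<partial>(M \<Otimes>\<^sub>M M)) \<partial>N)"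
    by (rule MMN.Fubini_integral[symmetric])
  moreover have "(\<integral>t. g p t \<partial>N) = cdf N (max (fst p) (snd p)) - cdf N (min (fst p) (snd p))" for p
  proof -
    have "g p = indicator {min (fst p) (snd p)..<max (fst p) (snd p)}"
      by (auto simp: g_def S_def split_beta' split: split_indicator)
    then show ?thesis
      using N.measure_atLeastLessThan_eq_cdf_diff[OF N_no_atoms, of "min (fst p) (snd p)" "max (fst p) (snd p)"]
      by simp
  qed
  moreover have "(\<integral>p. g p t \<partial>(M \<Otimes>\<^sub>M M)) = 2 * (cdf M t * (1 - cdf M t))" for t
  proof -
    have "(\<lambda>p. g p t) = indicator {(x, x'). min x x' \<le> t \<and> t < max x x'}"
      by (auto simp: g_def S_def split: split_indicator)
    then show ?thesis
      using measure_pair_min_le_less_max[OF M, of t] by (simp add: space_pair_measure)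
  qed
  ultimately show ?thesis
    by (simp add: split_beta')
qed

lemma qgini_identity_distortions:
  assumes "real_distribution MX" "real_distribution MT"
    and "msupport MT \<subseteq> msupport MX"
    and "\<forall>u\<in>{0..1}. q1 u = u" "\<forall>u\<in>{0..1}. q2 u = u"
  shows "qgini q1 q2 MX MT = (\<integral>t. cdf MX t * (1 - cdf MX t) \<partial>MT)"
proof -
  interpret X: real_distribution MX by fact
  interpret T: real_distribution MT by fact
  let ?S = "msupport MX \<inter> msupport MT"
  let ?g = "\<lambda>t. cdf MX t * (1 - cdf MX t)"
  have [measurable]: "cdf MX \<in> borel_measurable borel"
    by (intro borel_measurable_mono) (auto simp: mono_def X.cdf_nondecreasing)
  have [measurable]: "?S \<in> sets borel"
    using closed_msupport[of MX] closed_msupport[of MT] by (auto simp: X.M_is_borel T.M_is_borel)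
  have "qgini q1 q2 MX MT = (LINT t:?S|MT. ?g t)"
    unfolding qgini_def using assms(4,5) X.cdf_nonneg X.cdf_bounded_prob
    by (intro set_lebesgue_integral_cong) auto
  also have "\<dots> = (LINT t:space MT|MT. ?g t)"
    using AE_in_msupport[of MT] assms(3)
    by (intro set_integral_cong_set) (auto simp: set_borel_measurable_def T.M_is_borel elim!: eventually_mono)
  also have "\<dots> = (\<integral>t. ?g t \<partial>MT)"
    using X.cdf_nonneg X.cdf_bounded_prob
    by (intro set_integral_space T.integrable_const_bound[where B=1]) (auto simp: abs_le_iff mult_le_one)
  finally show ?thesis .
qed

theorem proposition12:
  fixes MX MT :: "real measure" and q1 q2 :: "real \<Rightarrow> real"
  assumes X_distr: "real_distribution MX"
    and X_nondeg: "\<forall>c. measure MX {c} < 1"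
    and min_fin: "integrable (MX \<Otimes>\<^sub>M MX) (\<lambda>(x, x'). min x x')"
    and max_fin: "integrable (MX \<Otimes>\<^sub>M MX) (\<lambda>(x, x'). max x x')"
    and T_distr: "real_distribution MT"
    and T_ac: "absolutely_continuous lborel MT"
    and same_supp: "msupport MT = msupport MX"
    and q1_id: "\<forall>u\<in>{0..1}. q1 u = u"
    and q2_id: "\<forall>u\<in>{0..1}. q2 u = u"
  shows "qgini q1 q2 MX MT =
           1/2 * (\<integral>(x, x'). cdf MT (max x x') - cdf MT (min x x') \<partial>(MX \<Otimes>\<^sub>M MX))"
proof -
  have "qgini q1 q2 MX MT = (\<integral>t. cdf MX t * (1 - cdf MX t) \<partial>MT)"
    using X_distr T_distr same_supp q1_id q2_id by (intro qgini_identity_distortions) auto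
  moreover have "(\<integral>(x, x'). cdf MT (max x x') - cdf MT (min x x') \<partial>(MX \<Otimes>\<^sub>M MX))
      = 2 * (\<integral>t. cdf MX t * (1 - cdf MX t) \<partial>MT)"
    using X_distr T_distr absolutely_continuous_lborel_measure_singleton[OF T_ac]
    by (rule integral_cdf_max_minus_cdf_min)
  ultimately show ?thesis
    by simp
qed

end
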